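(* Let $j\ge2$ be an integer and $\lambda>0$. For every integer $n\ge\max\{\lceil\lambda^{-1}\rceil,\,j-2\}$ we have $$\lambda_{n,j}(\lambda)\ge\frac{\lambda}{(1+\lambda)^{j-1}}.$$ Moreover, $$\lim_{n\to\infty}\widehat\lambda_{n,j-1}(\lambda)=\lim_{n\to\infty}\lambda_{n,j}(\lambda)=\frac{\lambda}{(1+\lambda)^{j-1}}.$$
   Context: For an integer $n\ge1$ let $f_n(x)=(1+x)^{n+1}/x$ for $x>0$. The function $f_n$ is strictly decreasing on $(0,1/n]$ and strictly increasing on $[1/n,\infty)$. Regular graph exponents (Schmidt–Summerer), defined algebraically. For $\lambda\in[1/n,\infty)$ let $\mu\in(0,1/n]$ be the unique solution of $f_n(\mu)=f_n(\lambda)$, and set $$\lambda_{n,j}(\lambda)=\lambda^{1-\frac{j-1}{n+1}}\mu^{\frac{j-1}{n+1}},\qquad 1\le j\le n+2 .$$ Thus $\lambda_{n,1}=\lambda$, $\lambda_{n,n+2}=\mu$, and all ratios $\lambda_{n,j}/\lambda_{n,j+1}$ are equal. For $\lambda=\infty$ put $\lambda_{n,1}=\infty$, $\lambda_{n,2}=1$ and $\lambda_{n,j}=0$ for $j\ge3$. Put $\widehat\lambda_{n,j}(\lambda):=\lambda_{n,j+1}(\lambda)$ for $1\le j\le n+1$, and $\widehat\lambda_n(\lambda):=\lambda_{n,2}(\lambda)$. These are the exponents of the regular graph in dimension $n$ with parameter $\lambda_n=\lambda$. *)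

theory Defs
  imports "HOL-Analysis.Analysis"
begin

definition fn_SS :: "nat \<Rightarrow> real \<Rightarrow> real" where
  "fn_SS n x = (1 + x) ^ (n + 1) / x"

text \<open>For lambda in [1/n, infinity): the unique mu in (0, 1/n] with f_n(mu) = f_n(lambda).\<close>
definition mu_SS :: "nat \<Rightarrow> real \<Rightarrow> real" where
  "mu_SS n lam = (THE mu. 0 < mu \<and> mu \<le> 1 / real n \<and> fn_SS n mu = fn_SS n lam)"

text \<open>Regular graph exponents lambda_{n,j}(lambda), meaningful for 1 <= j <= n+2, lambda >= 1/n.\<close>
definition lambda_nj :: "nat \<Rightarrow> nat \<Rightarrow> real \<Rightarrow> real" where
  "lambda_nj n j lam =
     lam powr (1 - (real j - 1) / (real n + 1)) * (mu_SS n lam) powr ((real j - 1) / (real n + 1))"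

definition lambda_hat_nj :: "nat \<Rightarrow> nat \<Rightarrow> real \<Rightarrow> real" where
  "lambda_hat_nj n j lam = lambda_nj n (j + 1) lam"

end

theory Submission
  imports Defs
begin

text \<open>Since \<open>f\<^sub>n(\<mu>) = f\<^sub>n(\<lambda>)\<close> means \<open>\<mu>/\<lambda> = ((1+\<mu>)/(1+\<lambda>))^(n+1)\<close>, the geometric
  interpolation between \<open>\<lambda>\<close> and \<open>\<mu>\<close> collapses to
  \<open>\<lambda>\<^sub>n\<^sub>,\<^sub>j(\<lambda>) = \<lambda> ((1+\<mu>)/(1+\<lambda>))^(j-1)\<close>. As \<open>\<mu> > 0\<close> this is at least
  \<open>\<lambda>/(1+\<lambda>)^(j-1)\<close>, and as \<open>0 < \<mu> \<le> 1/n\<close> it tends to that value.\<close>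

lemma has_real_derivative_fn_SS:
  assumes "x > 0"
  shows "(fn_SS n has_real_derivative (1 + x) ^ n * (real n * x - 1) / x\<^sup>2) (at x)"
proof -
  have "((\<lambda>x. (1 + x) ^ (n + 1) / x) has_real_derivative
      (real (n + 1) * (1 + x) ^ n * 1 * x - (1 + x) ^ (n + 1) * 1) / (x * x)) (at x)"
    by (rule derivative_eq_intros refl | use assms in auto)+
  moreover have "(real (n + 1) * (1 + x) ^ n * 1 * x - (1 + x) ^ (n + 1) * 1) / (x * x)
      = (1 + x) ^ n * (real n * x - 1) / x\<^sup>2"
    by (simp add: power2_eq_square algebra_simps)
  ultimately show ?thesis
    unfolding fn_SS_def[abs_def] by simp
qed

lemma continuous_on_fn_SS: "0 < a \<Longrightarrow> continuous_on {a..b} (fn_SS n)"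
  by (rule continuous_at_imp_continuous_on)
     (auto intro!: DERIV_isCont has_real_derivative_fn_SS)

lemma fn_SS_strict_decreasing:
  assumes "0 < a" "a < b" "b \<le> 1 / real n"
  shows "fn_SS n b < fn_SS n a"
proof (rule DERIV_neg_imp_decreasing_open[OF assms(2) _ continuous_on_fn_SS[OF assms(1)]])
  fix x assume x: "a < x" "x < b"
  have "real n * x < 1"
  proof (cases "n = 0")
    case False
    have "x < 1 / real n"
      using x assms by linarith
    then show ?thesis
      using False by (simp add: field_simps)
  qed simp
  then show "\<exists>y. (fn_SS n has_real_derivative y) (at x) \<and> y < 0"
    using x assms
    by (intro exI[of _ "(1 + x) ^ n * (real n * x - 1) / x\<^sup>2"])
       (auto intro!: has_real_derivative_fn_SS divide_neg_pos mult_pos_neg)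
qed

lemma fn_SS_increasing:
  assumes "n \<ge> 1" "1 / real n \<le> a" "a \<le> b"
  shows "fn_SS n a \<le> fn_SS n b"
proof (rule DERIV_nonneg_imp_nondecreasing[OF assms(3)])
  fix x assume x: "a \<le> x" "x \<le> b"
  have "0 < 1 / real n" "1 / real n \<le> x"
    using x assms by auto
  then have "x > 0"
    by linarith
  moreover have "real n * x \<ge> 1"
    using \<open>1 / real n \<le> x\<close> assms by (simp add: field_simps)
  ultimately
  show "\<exists>y. (fn_SS n has_real_derivative y) (at x) \<and> y \<ge> 0"
    by (intro exI[of _ "(1 + x) ^ n * (real n * x - 1) / x\<^sup>2"])
       (auto intro!: has_real_derivative_fn_SS)
qed

lemma pos_if_inverse_nat_le:
  assumes "n \<ge> 1" "1 / real n \<le> lam"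
  shows "lam > 0"
proof -
  have "0 < 1 / real n"
    using assms(1) by simp
  then show ?thesis
    using assms(2) by linarith
qed

lemma inverse_le_fn_SS: "0 < x \<Longrightarrow> 1 / x \<le> fn_SS n x"
  unfolding fn_SS_def by (simp add: divide_right_mono del: power_Suc)

lemma ex1_fn_SS_preimage_below:
  assumes n: "n \<ge> 1" and lam: "1 / real n \<le> lam"
  shows "\<exists>!mu. 0 < mu \<and> mu \<le> 1 / real n \<and> fn_SS n mu = fn_SS n lam"
proof -
  have "lam > 0"
    using n lam by (rule pos_if_inverse_nat_le)
  then have pos: "fn_SS n lam > 0"
    unfolding fn_SS_def by simp
  define e where "e = min (1 / real n) (1 / fn_SS n lam)"
  have e: "0 < e" "e \<le> 1 / real n"
    using n pos unfolding e_def by auto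
  \<comment> \<open>\<open>f\<^sub>n(e) \<ge> 1/e \<ge> f\<^sub>n(\<lambda>) \<ge> f\<^sub>n(1/n)\<close>, so the intermediate value theorem applies on \<open>[e, 1/n]\<close>.\<close>
  have "e \<le> 1 / fn_SS n lam"
    unfolding e_def by simp
  then have "fn_SS n lam \<le> 1 / e"
    using pos e(1) by (simp add: pos_le_divide_eq mult.commute)
  also have "\<dots> \<le> fn_SS n e"
    by (rule inverse_le_fn_SS[OF e(1)])
  finally have "fn_SS n lam \<le> fn_SS n e" .
  moreover have "fn_SS n (1 / real n) \<le> fn_SS n lam"
    using fn_SS_increasing[OF n _ lam] by simp
  ultimately obtain x where x: "e \<le> x" "x \<le> 1 / real n" "fn_SS n x = fn_SS n lam"
    using IVT2'[OF _ _ e(2) continuous_on_fn_SS[OF e(1)]] by blast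
  moreover have "z = x" if "0 < z" "z \<le> 1 / real n" "fn_SS n z = fn_SS n lam" for z
    using fn_SS_strict_decreasing[of z x n] fn_SS_strict_decreasing[of x z n] that x e
    by (cases z x rule: linorder_cases) auto
  ultimately show ?thesis
    using e by (intro ex1I[of _ x]) auto
qed

lemma mu_SS:
  assumes "n \<ge> 1" "1 / real n \<le> lam"
  shows "0 < mu_SS n lam" "mu_SS n lam \<le> 1 / real n" "fn_SS n (mu_SS n lam) = fn_SS n lam"
  using theI'[OF ex1_fn_SS_preimage_below[OF assms]] unfolding mu_SS_def[symmetric] by auto

lemma mu_SS_eq_power:
  assumes "n \<ge> 1" "1 / real n \<le> lam"
  shows "mu_SS n lam = lam * ((1 + mu_SS n lam) / (1 + lam)) ^ (n + 1)"
proof -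
  have "lam > 0"
    using assms by (rule pos_if_inverse_nat_le)
  then show ?thesis
    using mu_SS[OF assms] unfolding fn_SS_def power_divide
    by (simp add: field_simps del: power_Suc)
qed

lemma lambda_nj_eq:
  assumes n: "n \<ge> 1" and lam: "1 / real n \<le> lam" and j: "j \<ge> 1"
  shows "lambda_nj n j lam = lam * ((1 + mu_SS n lam) / (1 + lam)) ^ (j - 1)"
proof -
  define mu where "mu = mu_SS n lam"
  define r where "r = (1 + mu) / (1 + lam)"
  define t where "t = (real j - 1) / (real n + 1)"
  have lam_pos: "lam > 0"
    using n lam by (rule pos_if_inverse_nat_le)
  have r_pos: "r > 0"
    unfolding r_def mu_def using mu_SS(1)[OF n lam] lam_pos by simp
  have t: "real (n + 1) * t = real (j - 1)"
    unfolding t_def using j by (simp add: of_nat_diff divide_simps)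
  have "lambda_nj n j lam = lam powr (1 - t) * mu powr t"
    unfolding lambda_nj_def t_def mu_def by simp
  also have "mu powr t = lam powr t * (r ^ (n + 1)) powr t"
    using mu_SS_eq_power[OF n lam] lam_pos r_pos
    unfolding mu_def[symmetric] r_def[symmetric] by (simp add: powr_mult)
  also have "(r ^ (n + 1)) powr t = r ^ (j - 1)"
    using r_pos t by (simp add: powr_realpow[symmetric] powr_powr del: power_Suc of_nat_Suc)
  also have "lam powr (1 - t) * (lam powr t * r ^ (j - 1)) = lam * r ^ (j - 1)"
    using lam_pos by (simp add: powr_add[symmetric])
  finally show ?thesis
    unfolding r_def mu_def .
qed

lemma lambda_nj_ge:
  assumes "n \<ge> 1" "1 / real n \<le> lam" "j \<ge> 1"
  shows "lam / (1 + lam) ^ (j - 1) \<le> lambda_nj n j lam"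
proof -
  have lam_pos: "lam > 0"
    using assms(1,2) by (rule pos_if_inverse_nat_le)
  have "1 / (1 + lam) \<le> (1 + mu_SS n lam) / (1 + lam)"
    using mu_SS(1)[OF assms(1,2)] lam_pos by (simp add: divide_right_mono)
  then have "(1 / (1 + lam)) ^ (j - 1) \<le> ((1 + mu_SS n lam) / (1 + lam)) ^ (j - 1)"
    by (rule power_mono) (use lam_pos in simp)
  then have "lam * (1 / (1 + lam)) ^ (j - 1) \<le> lam * ((1 + mu_SS n lam) / (1 + lam)) ^ (j - 1)"
    using lam_pos by (simp add: mult_left_mono)
  then show ?thesis
    using lambda_nj_eq[OF assms] by (simp add: power_one_over)
qed

lemma inverse_nat_le_if_ceiling_le:
  assumes "lam > 0" "\<lceil>1 / lam\<rceil> \<le> int n"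
  shows "n \<ge> 1" "1 / real n \<le> lam"
proof -
  have le: "1 / lam \<le> real n"
    using assms(2) by linarith
  have pos: "0 < 1 / lam"
    using assms(1) by simp
  then have n_pos: "0 < real n"
    using le by linarith
  then show "n \<ge> 1"
    by simp
  have "1 / real n \<le> 1 / (1 / lam)"
    using divide_left_mono[OF le zero_le_one mult_pos_pos[OF n_pos pos]] .
  then show "1 / real n \<le> lam"
    by simp
qed

lemma eventually_inverse_nat_le:
  assumes "lam > 0"
  shows "eventually (\<lambda>n. n \<ge> 1 \<and> 1 / real n \<le> lam) sequentially"
  using eventually_ge_at_top[of "nat \<lceil>1 / lam\<rceil>"]
  by eventually_elim (intro conjI inverse_nat_le_if_ceiling_le[OF assms]; linarith)

lemma lambda_nj_tendsto:
  assumes "lam > 0" "j \<ge> 1"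
  shows "(\<lambda>n. lambda_nj n j lam) \<longlonglongrightarrow> lam / (1 + lam) ^ (j - 1)"
proof -
  note ev = eventually_inverse_nat_le[OF assms(1)]
  have "(\<lambda>n. mu_SS n lam) \<longlonglongrightarrow> 0"
  proof (rule tendsto_sandwich[of "\<lambda>_. 0" _ _ "\<lambda>n. 1 / real n"])
    show "eventually (\<lambda>n. 0 \<le> mu_SS n lam) sequentially"
      using ev by eventually_elim (use mu_SS(1) in force)
    show "eventually (\<lambda>n. mu_SS n lam \<le> 1 / real n) sequentially"
      using ev by eventually_elim (use mu_SS(2) in force)
  qed (simp_all add: lim_const_over_n)
  then have "(\<lambda>n. lam * ((1 + mu_SS n lam) / (1 + lam)) ^ (j - 1))
      \<longlonglongrightarrow> lam * ((1 + 0) / (1 + lam)) ^ (j - 1)"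
    using assms by (intro tendsto_intros) auto
  moreover have "eventually (\<lambda>n. lam * ((1 + mu_SS n lam) / (1 + lam)) ^ (j - 1)
      = lambda_nj n j lam) sequentially"
    using ev by eventually_elim (use lambda_nj_eq assms(2) in force)
  ultimately show ?thesis
    by (simp add: Lim_transform_eventually power_one_over)
qed

theorem corollary2p3:
  fixes j :: nat and lam :: real
  assumes "j \<ge> 2" and "lam > 0"
  shows "(\<forall>n::nat. int n \<ge> max \<lceil>1 / lam\<rceil> (int j - 2) \<longrightarrow>
            lambda_nj n j lam \<ge> lam / (1 + lam) ^ (j - 1))
      \<and> ((\<lambda>n. lambda_hat_nj n (j - 1) lam) \<longlonglongrightarrow> lam / (1 + lam) ^ (j - 1))
      \<and> ((\<lambda>n. lambda_nj n j lam) \<longlonglongrightarrow> lam / (1 + lam) ^ (j - 1))"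
proof -
  \<comment> \<open>The lower bound holds for all \<open>n \<ge> \<lceil>1/\<lambda>\<rceil>\<close>.\<close>
  have "lambda_hat_nj n (j - 1) lam = lambda_nj n j lam" for n
    unfolding lambda_hat_nj_def using assms(1) by simp
  then show ?thesis
    using assms lambda_nj_ge lambda_nj_tendsto inverse_nat_le_if_ceiling_le by auto
qed

end
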